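(* Let $r\ge2$ and let $t\ge3$ be an odd integer. Let $(X,\mathcal A)$ be a $(k_{t-1},b_r)$ resolvable configuration and let $E$ be a subset of $X$ with $|E|=t$. Then there exists a line $A\in\mathcal A$ with $|E\cap A|=1$.
   Context: A $(k_{t-1},b_r)$ configuration is a pair $(X,\mathcal A)$ where $X$ is a set of $k$ points and $\mathcal A$ is a collection of $b$ subsets of $X$ (lines) such that each line contains exactly $r$ points, each point belongs to exactly $t-1$ lines, and every pair of distinct points belongs to at most one line. It is resolvable if the lines can be partitioned into $t-1$ parallel classes, a parallel class being a set of lines that partitions $X$. *)

theory Defs
  imports Main
begin

definition configuration :: "'a set \<Rightarrow> 'a set set \<Rightarrow> nat \<Rightarrow> nat \<Rightarrow> nat \<Rightarrow> nat \<Rightarrow> bool" where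
  "configuration X \<A> k b r t \<longleftrightarrow>
     finite X \<and> card X = k \<and> finite \<A> \<and> card \<A> = b \<and>
     (\<forall>L\<in>\<A>. L \<subseteq> X \<and> card L = r) \<and>
     (\<forall>x\<in>X. card {L\<in>\<A>. x \<in> L} = t - 1) \<and>
     (\<forall>x\<in>X. \<forall>y\<in>X. x \<noteq> y \<longrightarrow> card {L\<in>\<A>. x \<in> L \<and> y \<in> L} \<le> 1)"

definition parallel_class :: "'a set \<Rightarrow> 'a set set \<Rightarrow> bool" where
  "parallel_class X C \<longleftrightarrow>
     \<Union>C = X \<and> {} \<notin> C \<and> (\<forall>L\<in>C. \<forall>M\<in>C. L \<noteq> M \<longrightarrow> L \<inter> M = {})"

definition resolvable :: "'a set \<Rightarrow> 'a set set \<Rightarrow> nat \<Rightarrow> bool" where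
  "resolvable X \<A> t \<longleftrightarrow>
     (\<exists>P :: nat \<Rightarrow> 'a set set.
        (\<Union>i<t-1. P i) = \<A> \<and>
        (\<forall>i<t-1. \<forall>j<t-1. i \<noteq> j \<longrightarrow> P i \<inter> P j = {}) \<and>
        (\<forall>i<t-1. parallel_class X (P i)))"

end

theory Submission
  imports Defs
begin

text \<open>Suppose no line meets E in exactly one point, and fix x in E. The t-1 lines through x,
  one from each parallel class, are distinct, each contains a further point of E, and two of
  them share no point besides x; since E - {x} has only t-1 points, each of these lines meets
  E in exactly two points. So the first parallel class cuts E into pairs, and t would be even.\<close>

lemma card_inter_eq_2_if_pencil:
  fixes L :: "'i \<Rightarrow> 'a set"
  assumes "finite E" and "x \<in> E" and "finite I" and card_E: "card E = card I + 1"
    and through: "\<forall>i\<in>I. x \<in> L i"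
    and meets: "\<forall>i\<in>I. \<exists>y\<in>E \<inter> L i. y \<noteq> x"
    and separated: "\<forall>i\<in>I. \<forall>j\<in>I. i \<noteq> j \<longrightarrow> E \<inter> L i \<inter> L j \<subseteq> {x}"
    and "i \<in> I"
  shows "card (E \<inter> L i) = 2"
proof -
  define D where "D i = E \<inter> L i - {x}" for i
  have fin_D: "finite (D j)" for j
    using \<open>finite E\<close> by (simp add: D_def)
  have D_pos: "1 \<le> card (D j)" if "j \<in> I" for j
    using meets that fin_D[of j] by (auto simp: D_def Suc_le_eq card_gt_0_iff)
  have "(\<Sum>j\<in>I. card (D j)) = card (\<Union>j\<in>I. D j)"
    using separated \<open>finite I\<close> fin_D by (subst card_UN_disjoint) (auto simp: D_def)
  also have "\<dots> \<le> card (E - {x})"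
    using \<open>finite E\<close> by (intro card_mono) (auto simp: D_def)
  also have "\<dots> = (\<Sum>j\<in>I. 1)"
    using \<open>finite E\<close> \<open>x \<in> E\<close> card_E by simp
  finally have sum_le: "(\<Sum>j\<in>I. card (D j)) \<le> (\<Sum>j\<in>I. 1)" .
  have "card (D i) = 1"
  proof (rule ccontr)
    assume "card (D i) \<noteq> 1"
    with D_pos[OF \<open>i \<in> I\<close>] have "1 < card (D i)"
      by linarith
    with D_pos \<open>i \<in> I\<close> \<open>finite I\<close> have "(\<Sum>j\<in>I. 1) < (\<Sum>j\<in>I. card (D j))"
      by (intro sum_strict_mono_ex1) auto
    with sum_le show False by simp
  qed
  moreover have "x \<in> E \<inter> L i"
    using \<open>x \<in> E\<close> through \<open>i \<in> I\<close> by blast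
  ultimately show ?thesis
    using \<open>finite E\<close> by (simp add: D_def card_Diff_singleton)
qed

lemma parallel_class_covers:
  assumes "parallel_class X C" and "x \<in> X"
  shows "\<exists>L\<in>C. x \<in> L"
  using assms unfolding parallel_class_def by blast

lemma parallel_class_eq_if_common_point:
  assumes "parallel_class X C" and "L \<in> C" and "M \<in> C" and "x \<in> L" and "x \<in> M"
  shows "L = M"
  using assms by (auto simp: parallel_class_def)

lemma even_card_if_parallel_class_cuts_pairs:
  assumes "parallel_class X C" and "E \<subseteq> X" and "finite E"
    and pairs: "\<forall>L\<in>C. E \<inter> L \<noteq> {} \<longrightarrow> card (E \<inter> L) = 2"
  shows "even (card E)"
proof -
  define Q where "Q = (\<lambda>L. E \<inter> L) ` {L \<in> C. E \<inter> L \<noteq> {}}"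
  have "\<Union>Q = E"
  proof (intro equalityI subsetI)
    fix x assume "x \<in> E"
    with assms(2) have "x \<in> X" ..
    then obtain L where "L \<in> C" "x \<in> L"
      using parallel_class_covers[OF assms(1)] by blast
    with \<open>x \<in> E\<close> show "x \<in> \<Union>Q"
      unfolding Q_def by blast
  qed (auto simp: Q_def)
  have disjoint: "pairwise disjnt Q"
  proof (rule pairwiseI)
    fix A B assume "A \<in> Q" "B \<in> Q" "A \<noteq> B"
    then obtain L M where "L \<in> C" "M \<in> C" "L \<noteq> M" "A = E \<inter> L" "B = E \<inter> M"
      unfolding Q_def by blast
    with assms(1) show "disjnt A B"
      unfolding parallel_class_def disjnt_def by blast
  qed
  have finite: "finite A" if "A \<in> Q" for A
    using \<open>finite E\<close> that by (auto simp: Q_def)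
  have "card E = (\<Sum>A\<in>Q. card A)"
    using card_Union_disjoint[OF disjoint finite] \<open>\<Union>Q = E\<close> by simp
  moreover have "even (card A)" if "A \<in> Q" for A
    using pairs that unfolding Q_def by auto
  ultimately show ?thesis
    by (simp add: dvd_sum)
qed

lemma configuration_line_eq:
  assumes "configuration X \<A> k b r t" and "L \<in> \<A>" and "M \<in> \<A>"
    and "x \<in> L \<inter> M" and "y \<in> L \<inter> M" and "x \<noteq> y"
  shows "L = M"
proof -
  from assms(1) have "card {N\<in>\<A>. x \<in> N \<and> y \<in> N} \<le> 1" and "finite \<A>"
    using assms(2,4-6) unfolding configuration_def by blast+
  then show ?thesis
    using assms(2-5) by (auto simp: card_le_Suc0_iff_eq)
qed

lemma resolution_line_meets_in_2:
  assumes conf: "configuration X \<A> k b r t"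
    and cover: "(\<Union>i<t-1. P i) = \<A>"
    and disjoint: "\<forall>i<t-1. \<forall>j<t-1. i \<noteq> j \<longrightarrow> P i \<inter> P j = {}"
    and classes: "\<forall>i<t-1. parallel_class X (P i)"
    and "E \<subseteq> X" and card_E: "card E = t"
    and no_tangent: "\<forall>A\<in>\<A>. card (E \<inter> A) \<noteq> 1"
    and "i < t - 1" and "L \<in> P i" and x_in: "x \<in> E \<inter> L"
  shows "card (E \<inter> L) = 2"
proof -
  have "finite E"
    using conf \<open>E \<subseteq> X\<close> unfolding configuration_def by (blast intro: finite_subset)
  have "x \<in> X"
    using x_in \<open>E \<subseteq> X\<close> by blast
  have "\<exists>N\<in>P j. x \<in> N" if "j < t - 1" for j
    using parallel_class_covers[OF classes[rule_format, OF that] \<open>x \<in> X\<close>] .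
  then obtain line where line: "line j \<in> P j" "x \<in> line j" if "j < t - 1" for j
    by metis
  have line_in: "line j \<in> \<A>" if "j < t - 1" for j
    using line(1)[OF that] cover that by blast
  have "line i = L"
    using parallel_class_eq_if_common_point[OF classes[rule_format, OF \<open>i < t - 1\<close>]]
      line[OF \<open>i < t - 1\<close>] \<open>L \<in> P i\<close> x_in by blast
  moreover have "card (E \<inter> line i) = 2"
  proof (rule card_inter_eq_2_if_pencil[where I = "{..<t-1}"])
    show "card E = card {..<t-1} + 1"
      using card_E \<open>i < t - 1\<close> by simp
    show "\<forall>j\<in>{..<t-1}. \<exists>y\<in>E \<inter> line j. y \<noteq> x"
    proof
      fix j assume "j \<in> {..<t-1}"
      then have "x \<in> E \<inter> line j" and "card (E \<inter> line j) \<noteq> 1"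
        using line(2) line_in no_tangent x_in by auto
      show "\<exists>y\<in>E \<inter> line j. y \<noteq> x"
      proof (rule ccontr)
        assume "\<not> ?thesis"
        with \<open>x \<in> E \<inter> line j\<close> have "E \<inter> line j = {x}"
          by blast
        with \<open>card (E \<inter> line j) \<noteq> 1\<close> show False
          by simp
      qed
    qed
    show "\<forall>j\<in>{..<t-1}. \<forall>l\<in>{..<t-1}. j \<noteq> l \<longrightarrow> E \<inter> line j \<inter> line l \<subseteq> {x}"
    proof (intro ballI impI subsetI)
      fix j l y assume "j \<in> {..<t-1}" "l \<in> {..<t-1}" "j \<noteq> l" and y: "y \<in> E \<inter> line j \<inter> line l"
      then have "j < t - 1" "l < t - 1"
        by simp_all
      have "P j \<inter> P l = {}"
        using disjoint \<open>j < t - 1\<close> \<open>l < t - 1\<close> \<open>j \<noteq> l\<close> by simp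
      then have "line j \<noteq> line l"
        using line(1)[OF \<open>j < t - 1\<close>] line(1)[OF \<open>l < t - 1\<close>] by auto
      moreover have "line j = line l" if "y \<noteq> x"
      proof (rule configuration_line_eq[OF conf line_in line_in])
        show "x \<in> line j \<inter> line l"
          using line(2) \<open>j < t - 1\<close> \<open>l < t - 1\<close> by blast
        show "y \<in> line j \<inter> line l"
          using y by blast
      qed (use that \<open>j < t - 1\<close> \<open>l < t - 1\<close> in auto)
      ultimately show "y \<in> {x}"
        by blast
    qed
  qed (use \<open>finite E\<close> x_in line(2) \<open>i < t - 1\<close> in auto)
  ultimately show ?thesis
    by simp
qed

theorem lemma11:
  fixes X :: "'a set" and \<A> :: "'a set set" and E :: "'a set" and k b r t :: nat
  assumes "r \<ge> 2" and "t \<ge> 3" and "odd t"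
    and "configuration X \<A> k b r t" and "resolvable X \<A> t"
    and "E \<subseteq> X" and "card E = t"
  shows "\<exists>A\<in>\<A>. card (E \<inter> A) = 1"
proof (rule ccontr)
  assume "\<not> ?thesis"
  then have no_tangent: "\<forall>A\<in>\<A>. card (E \<inter> A) \<noteq> 1"
    by blast
  from assms(5) obtain P where cover: "(\<Union>i<t-1. P i) = \<A>"
    and disjoint: "\<forall>i<t-1. \<forall>j<t-1. i \<noteq> j \<longrightarrow> P i \<inter> P j = {}"
    and classes: "\<forall>i<t-1. parallel_class X (P i)"
    unfolding resolvable_def by blast
  have "0 < t - 1"
    using assms(2) by simp
  have "finite E"
    using assms(4,6) by (auto simp: configuration_def intro: finite_subset)
  have "\<forall>L\<in>P 0. E \<inter> L \<noteq> {} \<longrightarrow> card (E \<inter> L) = 2"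
    using resolution_line_meets_in_2[OF assms(4) cover disjoint classes assms(6,7) no_tangent
        \<open>0 < t - 1\<close>] by blast
  then have "even (card E)"
    using even_card_if_parallel_class_cuts_pairs classes \<open>0 < t - 1\<close> assms(6) \<open>finite E\<close>
    by blast
  with assms(3,7) show False
    by simp
qed

end
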